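(* Let $\mathcal B=(B_1,\dots,B_d)$ be a splitting of order $d$ of $B_J\in\mathbb R^{n\times n}$. Then $1$ is an eigenvalue of $T(\mathcal B)$ if and only if $1$ is an eigenvalue of $B_J$. In particular, if $1$ is an eigenvalue of $B_J$ then the iteration $X^{(k+1)}=T(\mathcal B)X^{(k)}+\Gamma$ cannot be convergent for all initial data (since $\rho(T(\mathcal B))\ge1$).
   Context: For $B\in\mathbb R^{n\times n}$, a splitting of $B$ of order $d\ge1$ is an ordered $d$-tuple $\mathcal B=(B_1,\dots,B_d)$ of real $n\times n$ matrices with $B_p\neq O$ for all $p$, $\sum_{p=1}^d B_p=B$, and $B_p\circ B_q=O$ (Hadamard product) for $p\ne q$. The iteration matrix of $\mathcal B$ is the $dn\times dn$ matrix $T(\mathcal B)=(I_{dn}-\mathcal L)^{-1}\mathcal U$, where $\mathcal L,\mathcal U$ are $d\times d$ block matrices with $n\times n$ blocks, $\mathcal L_{ij}=B_j$ if $i>j$ and $O$ otherwise, $\mathcal U_{ij}=B_j$ if $i\le j$ and $O$ otherwise. *)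

theory Defs
  imports "Jordan_Normal_Form.Matrix" "Jordan_Normal_Form.Char_Poly"
    "Jordan_Normal_Form.Gauss_Jordan_Elimination"
begin

text \<open>A splitting of order d of the n x n matrix BJ, indexed 0..d-1 (paper: 1..d).\<close>
definition is_splitting :: "nat \<Rightarrow> nat \<Rightarrow> (nat \<Rightarrow> real mat) \<Rightarrow> real mat \<Rightarrow> bool" where
  "is_splitting n d B BJ \<longleftrightarrow>
     d \<ge> 1 \<and> BJ \<in> carrier_mat n n \<and>
     (\<forall>p<d. B p \<in> carrier_mat n n \<and> B p \<noteq> 0\<^sub>m n n) \<and>
     BJ = mat n n (\<lambda>(i,j). \<Sum>p<d. B p $$ (i,j)) \<and>
     (\<forall>p<d. \<forall>q<d. p \<noteq> q \<longrightarrow> (\<forall>i<n. \<forall>j<n. B p $$ (i,j) * B q $$ (i,j) = 0))"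

text \<open>Block matrices: block (I,J) occupies rows I*n..I*n+n-1, columns J*n..J*n+n-1.\<close>
definition split_L :: "nat \<Rightarrow> nat \<Rightarrow> (nat \<Rightarrow> real mat) \<Rightarrow> real mat" where
  "split_L n d B = mat (d*n) (d*n) (\<lambda>(i,j).
     if i div n > j div n then B (j div n) $$ (i mod n, j mod n) else 0)"

definition split_U :: "nat \<Rightarrow> nat \<Rightarrow> (nat \<Rightarrow> real mat) \<Rightarrow> real mat" where
  "split_U n d B = mat (d*n) (d*n) (\<lambda>(i,j).
     if i div n \<le> j div n then B (j div n) $$ (i mod n, j mod n) else 0)"

definition iter_mat :: "nat \<Rightarrow> nat \<Rightarrow> (nat \<Rightarrow> real mat) \<Rightarrow> real mat" where
  "iter_mat n d B = the (mat_inverse (1\<^sub>m (d*n) - split_L n d B)) * split_U n d B"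

end

theory Submission
  imports Defs
begin

text \<open>Since \<open>1 - L\<close> is unit lower triangular, \<open>T v = v\<close> is equivalent to \<open>(L + U) v = v\<close>.
  Every block row of \<open>L + U\<close> is \<open>(B\<^sub>1, \<dots>, B\<^sub>d)\<close>, so \<open>(L + U) v\<close> is the vector
  \<open>(y, \<dots>, y)\<close> with \<open>y = \<Sum>\<^sub>p B\<^sub>p v\<^sub>p\<close>. Hence the fixed vectors of \<open>T\<close> are exactly the
  stacked copies \<open>(w, \<dots>, w)\<close> of the fixed vectors \<open>w\<close> of \<open>B\<^sub>J = \<Sum>\<^sub>p B\<^sub>p\<close>.\<close>

lemma sum_lessThan_mult_div_mod:
  fixes g :: "nat \<Rightarrow> nat \<Rightarrow> 'a::comm_monoid_add"
  shows "(\<Sum>j<d*n. g (j div n) (j mod n)) = (\<Sum>p<d. \<Sum>c<n. g p c)"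
proof (induction d)
  case 0
  then show ?case by simp
next
  case (Suc d)
  let ?f = "\<lambda>j. g (j div n) (j mod n)"
  have "(\<Sum>j<Suc d * n. ?f j) = (\<Sum>j<d*n. ?f j) + (\<Sum>j\<in>{0 + d*n..<n + d*n}. ?f j)"
    by (simp add: lessThan_atLeast0 sum.atLeastLessThan_concat add.commute)
  also have "(\<Sum>j\<in>{0 + d*n..<n + d*n}. ?f j) = (\<Sum>c<n. ?f (c + d*n))"
    by (simp only: sum.shift_bounds_nat_ivl lessThan_atLeast0)
  also have "\<dots> = (\<Sum>c<n. g d c)"
    by (rule sum.cong) auto
  finally show ?case using Suc by simp
qed

definition replicate_vec :: "nat \<Rightarrow> nat \<Rightarrow> 'a vec \<Rightarrow> 'a vec" where
  "replicate_vec d n w = vec (d*n) (\<lambda>i. w $ (i mod n))"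

definition block_row_sum :: "nat \<Rightarrow> nat \<Rightarrow> (nat \<Rightarrow> 'a::comm_semiring_0 mat) \<Rightarrow> 'a vec \<Rightarrow> 'a vec" where
  "block_row_sum n d B v = vec n (\<lambda>r. \<Sum>j<d*n. B (j div n) $$ (r, j mod n) * v $ j)"

lemma replicate_vec_carrier [simp]: "replicate_vec d n w \<in> carrier_vec (d*n)"
  by (simp add: replicate_vec_def)

lemma block_row_sum_carrier [simp]: "block_row_sum n d B v \<in> carrier_vec n"
  by (simp add: block_row_sum_def)

lemma replicate_vec_eq_zero_iff:
  assumes "d \<ge> 1" and "w \<in> carrier_vec n"
  shows "replicate_vec d n w = 0\<^sub>v (d*n) \<longleftrightarrow> w = 0\<^sub>v n"
proof
  assume zero: "replicate_vec d n w = 0\<^sub>v (d*n)"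
  show "w = 0\<^sub>v n"
  proof (rule eq_vecI)
    fix r assume "r < dim_vec (0\<^sub>v n :: 'a vec)"
    then have "r < n" by simp
    then have "r < d*n" "r mod n = r" using \<open>d \<ge> 1\<close> by (auto intro: less_le_trans)
    then show "w $ r = 0\<^sub>v n $ r"
      using \<open>r < n\<close> arg_cong[OF zero, of "\<lambda>v. v $ r"] by (simp add: replicate_vec_def)
  qed (use assms in simp)
next
  assume "w = 0\<^sub>v n"
  then show "replicate_vec d n w = 0\<^sub>v (d*n)"
    by (intro eq_vecI) (auto simp: replicate_vec_def intro!: index_zero_vec(1) mod_less_divisor gr0I)
qed

lemma block_row_sum_replicate_vec:
  assumes "w \<in> carrier_vec n"
  shows "block_row_sum n d B (replicate_vec d n w) = mat n n (\<lambda>(i,j). \<Sum>p<d. B p $$ (i,j)) *\<^sub>v w"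
proof (rule eq_vecI)
  fix r assume "r < dim_vec (mat n n (\<lambda>(i,j). \<Sum>p<d. B p $$ (i,j)) *\<^sub>v w)"
  then have "r < n" by simp
  have "block_row_sum n d B (replicate_vec d n w) $ r = (\<Sum>p<d. \<Sum>c<n. B p $$ (r,c) * w $ c)"
    using \<open>r < n\<close> sum_lessThan_mult_div_mod[where g = "\<lambda>p c. B p $$ (r,c) * w $ c" and d = d and n = n]
    by (simp add: block_row_sum_def replicate_vec_def)
  also have "\<dots> = (\<Sum>c<n. (\<Sum>p<d. B p $$ (r,c)) * w $ c)"
    by (simp add: sum_distrib_right sum.swap[of _ "{..<n}"])
  also have "\<dots> = (mat n n (\<lambda>(i,j). \<Sum>p<d. B p $$ (i,j)) *\<^sub>v w) $ r"
    using \<open>r < n\<close> assms by (simp add: scalar_prod_def lessThan_atLeast0)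
  finally show "block_row_sum n d B (replicate_vec d n w) $ r = \<dots>" .
qed simp

lemma split_L_carrier: "split_L n d B \<in> carrier_mat (d*n) (d*n)"
  by (simp add: split_L_def)

lemma split_U_carrier: "split_U n d B \<in> carrier_mat (d*n) (d*n)"
  by (simp add: split_U_def)

lemma one_minus_split_L_carrier: "1\<^sub>m (d*n) - split_L n d B \<in> carrier_mat (d*n) (d*n)"
  using split_L_carrier by (rule minus_carrier_mat)

lemma det_one_minus_split_L: "det (1\<^sub>m (d*n) - split_L n d B) = 1"
proof -
  let ?M = "1\<^sub>m (d*n) - split_L n d B"
  have M: "?M \<in> carrier_mat (d*n) (d*n)" by (rule one_minus_split_L_carrier)
  have "det ?M = prod_list (diag_mat ?M)"
  proof (rule det_lower_triangular[OF _ M])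
    fix i j assume "i < j" "j < d*n"
    then have "\<not> j div n < i div n" by (simp add: div_le_mono leD)
    with \<open>i < j\<close> \<open>j < d*n\<close> show "?M $$ (i,j) = 0" by (simp add: split_L_def)
  qed
  also have "diag_mat ?M = replicate (d*n) 1"
    by (intro nth_equalityI) (auto simp: diag_mat_def split_L_def)
  finally show ?thesis by simp
qed

lemma mat_inverse_one_minus_split_L:
  obtains P where "mat_inverse (1\<^sub>m (d*n) - split_L n d B) = Some P"
    and "(1\<^sub>m (d*n) - split_L n d B) * P = 1\<^sub>m (d*n)" and "P * (1\<^sub>m (d*n) - split_L n d B) = 1\<^sub>m (d*n)"
    and "P \<in> carrier_mat (d*n) (d*n)"
proof -
  let ?M = "1\<^sub>m (d*n) - split_L n d B"
  have M: "?M \<in> carrier_mat (d*n) (d*n)" by (rule one_minus_split_L_carrier)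
  have "?M \<in> Units (ring_mat TYPE(real) (d*n) ())"
    using det_non_zero_imp_unit[OF M] det_one_minus_split_L by simp
  then obtain P where "mat_inverse ?M = Some P"
    using mat_inverse(1)[OF M] by fastforce
  with mat_inverse(2)[OF M this] show ?thesis using that by blast
qed

lemma mult_inverse_mult_vec_fixed_iff:
  fixes M P U :: "'a::field mat"
  assumes "M \<in> carrier_mat m m" "P \<in> carrier_mat m m" "U \<in> carrier_mat m m" "v \<in> carrier_vec m"
    and "M * P = 1\<^sub>m m" "P * M = 1\<^sub>m m"
  shows "(P * U) *\<^sub>v v = v \<longleftrightarrow> U *\<^sub>v v = M *\<^sub>v v"
proof
  assume "(P * U) *\<^sub>v v = v"
  then have "M *\<^sub>v v = (M * P) *\<^sub>v (U *\<^sub>v v)"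
    using assms(1-4) by (metis assoc_mult_mat_vec mult_mat_vec_carrier)
  then show "U *\<^sub>v v = M *\<^sub>v v" using assms by simp
next
  assume "U *\<^sub>v v = M *\<^sub>v v"
  then have "(P * U) *\<^sub>v v = (P * M) *\<^sub>v v"
    using assms(1-4) by (simp add: assoc_mult_mat_vec)
  then show "(P * U) *\<^sub>v v = v" using assms by simp
qed

lemma split_L_plus_split_U_mult_vec:
  assumes "v \<in> carrier_vec (d*n)"
  shows "split_L n d B *\<^sub>v v + split_U n d B *\<^sub>v v = replicate_vec d n (block_row_sum n d B v)"
proof (rule eq_vecI)
  fix i assume "i < dim_vec (replicate_vec d n (block_row_sum n d B v))"
  then have i: "i < d*n" by (simp add: replicate_vec_def)
  then have "i mod n < n" by (cases "n = 0") auto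
  have "(split_L n d B *\<^sub>v v + split_U n d B *\<^sub>v v) $ i
      = (\<Sum>j<d*n. (split_L n d B $$ (i,j) + split_U n d B $$ (i,j)) * v $ j)"
    using i assms split_L_carrier[of n d B] split_U_carrier[of n d B]
    by (simp add: scalar_prod_def sum.distrib algebra_simps lessThan_atLeast0)
  also have "\<dots> = (\<Sum>j<d*n. B (j div n) $$ (i mod n, j mod n) * v $ j)"
    by (rule sum.cong) (use i in \<open>auto simp: split_L_def split_U_def\<close>)
  also have "\<dots> = replicate_vec d n (block_row_sum n d B v) $ i"
    using i \<open>i mod n < n\<close> by (simp add: replicate_vec_def block_row_sum_def)
  finally show "(split_L n d B *\<^sub>v v + split_U n d B *\<^sub>v v) $ i = \<dots>" .
qed (use split_U_carrier[of n d B] in \<open>simp add: replicate_vec_def\<close>)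

lemma iter_mat_carrier: "iter_mat n d B \<in> carrier_mat (d*n) (d*n)"
proof -
  obtain P where "mat_inverse (1\<^sub>m (d*n) - split_L n d B) = Some P" and "P \<in> carrier_mat (d*n) (d*n)"
    by (rule mat_inverse_one_minus_split_L)
  then show ?thesis
    using split_U_carrier by (simp add: iter_mat_def mult_carrier_mat)
qed

lemma iter_mat_mult_vec_fixed_iff:
  assumes v: "v \<in> carrier_vec (d*n)"
  shows "iter_mat n d B *\<^sub>v v = v \<longleftrightarrow> replicate_vec d n (block_row_sum n d B v) = v"
proof -
  let ?L = "split_L n d B" and ?U = "split_U n d B"
  obtain P where inv: "mat_inverse (1\<^sub>m (d*n) - ?L) = Some P"
    and MP: "(1\<^sub>m (d*n) - ?L) * P = 1\<^sub>m (d*n)" and PM: "P * (1\<^sub>m (d*n) - ?L) = 1\<^sub>m (d*n)"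
    and P: "P \<in> carrier_mat (d*n) (d*n)"
    by (rule mat_inverse_one_minus_split_L)
  have "iter_mat n d B = P * ?U"
    using inv by (simp add: iter_mat_def)
  then have "iter_mat n d B *\<^sub>v v = v \<longleftrightarrow> ?U *\<^sub>v v = (1\<^sub>m (d*n) - ?L) *\<^sub>v v"
    using mult_inverse_mult_vec_fixed_iff[OF one_minus_split_L_carrier P split_U_carrier v MP PM]
    by simp
  also have "(1\<^sub>m (d*n) - ?L) *\<^sub>v v = v - ?L *\<^sub>v v"
    using minus_mult_distrib_mat_vec[OF one_carrier_mat split_L_carrier v] v by simp
  also have "?U *\<^sub>v v = v - ?L *\<^sub>v v \<longleftrightarrow> ?L *\<^sub>v v + ?U *\<^sub>v v = v"
    using v split_L_carrier[of n d B] split_U_carrier[of n d B]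
    by (auto simp: vec_eq_iff simp del: index_mult_mat_vec)
  finally show ?thesis using split_L_plus_split_U_mult_vec[OF v] by simp
qed

lemma iter_mat_mult_vec_fixed_iff_replicate_vec:
  assumes v: "v \<in> carrier_vec (d*n)"
  shows "iter_mat n d B *\<^sub>v v = v \<longleftrightarrow>
    (\<exists>w \<in> carrier_vec n. v = replicate_vec d n w \<and> mat n n (\<lambda>(i,j). \<Sum>p<d. B p $$ (i,j)) *\<^sub>v w = w)"
    (is "_ \<longleftrightarrow> (\<exists>w \<in> _. _ \<and> ?BJ *\<^sub>v w = w)")
proof
  let ?w = "block_row_sum n d B v"
  assume "iter_mat n d B *\<^sub>v v = v"
  then have v_eq: "v = replicate_vec d n ?w"
    using v by (simp add: iter_mat_mult_vec_fixed_iff)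
  have "?BJ *\<^sub>v ?w = block_row_sum n d B (replicate_vec d n ?w)"
    by (simp add: block_row_sum_replicate_vec)
  also have "\<dots> = ?w"
    using v_eq by simp
  finally show "\<exists>w \<in> carrier_vec n. v = replicate_vec d n w \<and> ?BJ *\<^sub>v w = w"
    using v_eq block_row_sum_carrier by blast
next
  assume "\<exists>w \<in> carrier_vec n. v = replicate_vec d n w \<and> ?BJ *\<^sub>v w = w"
  then show "iter_mat n d B *\<^sub>v v = v"
    using v by (auto simp: iter_mat_mult_vec_fixed_iff block_row_sum_replicate_vec)
qed

theorem proposition2p4:
  fixes n d :: nat and B :: "nat \<Rightarrow> real mat" and BJ :: "real mat"
  assumes "is_splitting n d B BJ"
  shows "eigenvalue (iter_mat n d B) 1 \<longleftrightarrow> eigenvalue BJ 1"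
proof -
  have "d \<ge> 1" and BJ: "BJ \<in> carrier_mat n n" "BJ = mat n n (\<lambda>(i,j). \<Sum>p<d. B p $$ (i,j))"
    using assms by (auto simp: is_splitting_def)
  have "dim_row (iter_mat n d B) = d*n"
    using iter_mat_carrier by blast
  then have "eigenvalue (iter_mat n d B) 1 \<longleftrightarrow>
      (\<exists>v \<in> carrier_vec (d*n). v \<noteq> 0\<^sub>v (d*n) \<and> iter_mat n d B *\<^sub>v v = v)"
    by (auto simp: eigenvalue_def eigenvector_def)
  also have "\<dots> \<longleftrightarrow> (\<exists>w \<in> carrier_vec n. w \<noteq> 0\<^sub>v n \<and> BJ *\<^sub>v w = w)"
    using replicate_vec_eq_zero_iff[OF \<open>d \<ge> 1\<close>] BJ(2)
    by (auto simp: iter_mat_mult_vec_fixed_iff_replicate_vec) (metis replicate_vec_carrier)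
  also have "\<dots> \<longleftrightarrow> eigenvalue BJ 1"
    using BJ(1) by (auto simp: eigenvalue_def eigenvector_def)
  finally show ?thesis .
qed

end
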